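(* Let $\Omega\subset\mathbb{R}^d$ be a bounded domain and $\mu$ a positive finite Borel measure on $\mathbb{R}^d$ with $\operatorname{supp}(\mu)\subset\overline\Omega$ and $\mu(\Omega)>0$, and assume (MPI) holds. If $u\in C(\Omega)$ is a $\mu$-harmonic function on $\Omega$ and $u$ vanishes on $\partial\Omega$, then $u\equiv0$.
   Context: (MPI): there is $C>0$ with $\int_\Omega|u|^2\,d\mu\le C\int_\Omega|\nabla u|^2\,d\boldsymbol{x}$ for all $u\in C_c^\infty(\Omega)$. Under (MPI), each $u\in H_0^1(\Omega)$ has a unique $L^2(\Omega,\mu)$-representative (the $L^2(\mu)$-limit of $C_c^\infty(\Omega)$ approximants in $H_0^1$); let $\mathcal N$ be the set of $u\in H_0^1(\Omega)$ with zero representative and $\mathcal N^\perp$ its orthogonal complement in $H_0^1(\Omega)$. $\Delta_\mu$ is defined by: $u\in\operatorname{Dom}(\Delta_\mu)$, $-\Delta_\mu u=f$ iff $u\in\mathcal N^\perp$, $f\in L^2(\Omega,\mu)$, and $\int_\Omega\nabla u\cdot\nabla\varphi\,d\boldsymbol{x}=\int_\Omega f\varphi\,d\mu$ for all $\varphi\in C_c^\infty(\Omega)$. A function $u$ is $\mu$-harmonic if $u\in\operatorname{Dom}(\Delta_\mu)$ and $\Delta_\mu u=0$. *)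

theory Defs
  imports "HOL-Analysis.Analysis"
begin

coinductive smooth_fun :: "('a::euclidean_space \<Rightarrow> real) \<Rightarrow> bool" where
  "(\<And>x. f differentiable (at x)) \<Longrightarrow> (\<And>v. smooth_fun (\<lambda>x. frechet_derivative f (at x) v))
    \<Longrightarrow> smooth_fun f"

definition test_fun :: "'a::euclidean_space set \<Rightarrow> ('a \<Rightarrow> real) \<Rightarrow> bool" where
  "test_fun \<Omega> \<phi> \<longleftrightarrow> smooth_fun \<phi> \<and> compact (closure {x. \<phi> x \<noteq> 0})
      \<and> closure {x. \<phi> x \<noteq> 0} \<subseteq> \<Omega>"

definition grad :: "('a::euclidean_space \<Rightarrow> real) \<Rightarrow> 'a \<Rightarrow> 'a" where
  "grad \<phi> x = (\<Sum>b\<in>Basis. frechet_derivative \<phi> (at x) b *\<^sub>R b)"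

definition measure_support :: "'a::metric_space measure \<Rightarrow> 'a set" where
  "measure_support \<mu> = {x. \<forall>e>0. emeasure \<mu> (ball x e) > 0}"

definition MPI :: "'a::euclidean_space set \<Rightarrow> 'a measure \<Rightarrow> bool" where
  "MPI \<Omega> \<mu> \<longleftrightarrow> (\<exists>C>0. \<forall>\<phi>. test_fun \<Omega> \<phi> \<longrightarrow>
     (\<integral>\<^sup>+x\<in>\<Omega>. ennreal ((\<phi> x)\<^sup>2) \<partial>\<mu>)
       \<le> ennreal C * (\<integral>\<^sup>+x\<in>\<Omega>. ennreal ((norm (grad \<phi> x))\<^sup>2) \<partial>lebesgue))"

text \<open>An element of H_0^1(Omega), represented by a function u on Omega together with its
  weak gradient g: both are L^2(Omega)-limits of phi_n, grad phi_n for test functions phi_n.\<close>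
definition H01_approx ::
  "'a::euclidean_space set \<Rightarrow> ('a \<Rightarrow> real) \<Rightarrow> ('a \<Rightarrow> 'a) \<Rightarrow> (nat \<Rightarrow> 'a \<Rightarrow> real) \<Rightarrow> bool" where
  "H01_approx \<Omega> u g \<phi> \<longleftrightarrow>
     (\<lambda>x. indicator \<Omega> x * u x) \<in> borel_measurable lebesgue \<and>
     (\<lambda>x. indicator \<Omega> x *\<^sub>R g x) \<in> borel_measurable lebesgue \<and>
     (\<forall>n. test_fun \<Omega> (\<phi> n)) \<and>
     (\<lambda>n. \<integral>\<^sup>+x\<in>\<Omega>. ennreal ((\<phi> n x - u x)\<^sup>2) \<partial>lebesgue) \<longlonglongrightarrow> 0 \<and>
     (\<lambda>n. \<integral>\<^sup>+x\<in>\<Omega>. ennreal ((norm (grad (\<phi> n) x - g x))\<^sup>2) \<partial>lebesgue) \<longlonglongrightarrow> 0"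

definition H01 :: "'a::euclidean_space set \<Rightarrow> ('a \<Rightarrow> real) \<Rightarrow> ('a \<Rightarrow> 'a) \<Rightarrow> bool" where
  "H01 \<Omega> u g \<longleftrightarrow> (\<exists>\<phi>. H01_approx \<Omega> u g \<phi>)"

text \<open>v is the L^2(Omega, mu)-representative of the H_0^1 element (u,g): the L^2(mu)-limit
  of the test-function approximants.\<close>
definition mu_rep :: "'a::euclidean_space set \<Rightarrow> 'a measure \<Rightarrow> ('a \<Rightarrow> real) \<Rightarrow> ('a \<Rightarrow> 'a)
    \<Rightarrow> ('a \<Rightarrow> real) \<Rightarrow> bool" where
  "mu_rep \<Omega> \<mu> u g v \<longleftrightarrow> (\<exists>\<phi>. H01_approx \<Omega> u g \<phi> \<and>
     (\<lambda>x. indicator \<Omega> x * v x) \<in> borel_measurable \<mu> \<and>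
     (\<lambda>n. \<integral>\<^sup>+x\<in>\<Omega>. ennreal ((\<phi> n x - v x)\<^sup>2) \<partial>\<mu>) \<longlonglongrightarrow> 0)"

definition in_N :: "'a::euclidean_space set \<Rightarrow> 'a measure \<Rightarrow> ('a \<Rightarrow> real) \<Rightarrow> ('a \<Rightarrow> 'a) \<Rightarrow> bool" where
  "in_N \<Omega> \<mu> u g \<longleftrightarrow> H01 \<Omega> u g \<and> mu_rep \<Omega> \<mu> u g (\<lambda>_. 0)"

definition in_N_perp :: "'a::euclidean_space set \<Rightarrow> 'a measure \<Rightarrow> ('a \<Rightarrow> real) \<Rightarrow> ('a \<Rightarrow> 'a) \<Rightarrow> bool" where
  "in_N_perp \<Omega> \<mu> u g \<longleftrightarrow> H01 \<Omega> u g \<and>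
     (\<forall>w gw. in_N \<Omega> \<mu> w gw \<longrightarrow> (LINT x:\<Omega>|lebesgue. g x \<bullet> gw x) = 0)"

text \<open>u \<in> Dom(Delta_mu) and -Delta_mu u = f (u given with its weak gradient g).\<close>
definition neg_mu_laplacian :: "'a::euclidean_space set \<Rightarrow> 'a measure \<Rightarrow> ('a \<Rightarrow> real) \<Rightarrow> ('a \<Rightarrow> 'a)
    \<Rightarrow> ('a \<Rightarrow> real) \<Rightarrow> bool" where
  "neg_mu_laplacian \<Omega> \<mu> u g f \<longleftrightarrow> in_N_perp \<Omega> \<mu> u g \<and>
     (\<lambda>x. indicator \<Omega> x * f x) \<in> borel_measurable \<mu> \<and>
     (\<integral>\<^sup>+x\<in>\<Omega>. ennreal ((f x)\<^sup>2) \<partial>\<mu>) < \<infinity> \<and>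
     (\<forall>\<phi>. test_fun \<Omega> \<phi> \<longrightarrow>
        (LINT x:\<Omega>|lebesgue. g x \<bullet> grad \<phi> x) = (LINT x:\<Omega>|\<mu>. f x * \<phi> x))"

definition mu_harmonic :: "'a::euclidean_space set \<Rightarrow> 'a measure \<Rightarrow> ('a \<Rightarrow> real) \<Rightarrow> bool" where
  "mu_harmonic \<Omega> \<mu> u \<longleftrightarrow> (\<exists>g. neg_mu_laplacian \<Omega> \<mu> u g (\<lambda>_. 0))"

end

theory Submission
  imports Defs
begin

(*
  With right-hand side 0, the defining identity of Delta_mu says that the weak gradient g of u
  is L^2-orthogonal to the gradients of all test functions. Since g is the L^2-limit of such
  gradients, g = 0. The test functions approximating u therefore have gradients tending to 0
  in L^2, so by the Poincare inequality on the bounded set Omega they tend to 0 themselves: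
  u = 0 almost everywhere on Omega, hence everywhere by continuity.

  The Poincare inequality ||phi|| <= (2R/d) ||grad phi|| for phi supported in the ball of
  radius R comes from differentiating the dilation identity
  int phi(l x)^2 dx = l^(-d) int phi^2 dx at l = 1, which yields
  int 2 phi(x) (grad phi(x) . x) dx = -d int phi^2 dx, followed by Cauchy-Schwarz.
*)

section \<open>Smooth functions and test functions\<close>

lemma smooth_fun_differentiable: "smooth_fun f \<Longrightarrow> f differentiable (at x)"
  by (erule smooth_fun.cases) auto

lemma smooth_fun_frechet_derivative:
  "smooth_fun f \<Longrightarrow> smooth_fun (\<lambda>x. frechet_derivative f (at x) v)"
  by (erule smooth_fun.cases) auto

lemma smooth_fun_continuous_on: "smooth_fun f \<Longrightarrow> continuous_on S f"
  by (meson continuous_at_imp_continuous_on differentiable_imp_continuous_within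
      smooth_fun_differentiable)

lemma frechet_derivative_eq_grad_inner:
  assumes "f differentiable (at x)"
  shows "frechet_derivative f (at x) v = grad f x \<bullet> v"
proof -
  have "linear (frechet_derivative f (at x))"
    using assms frechet_derivative_works has_derivative_linear by blast
  have "frechet_derivative f (at x) v = frechet_derivative f (at x) (\<Sum>b\<in>Basis. (v \<bullet> b) *\<^sub>R b)"
    by (simp add: euclidean_representation)
  also have "\<dots> = (\<Sum>b\<in>Basis. (v \<bullet> b) * frechet_derivative f (at x) b)"
    using \<open>linear _\<close> by (simp add: linear_sum linear_scale)
  also have "\<dots> = grad f x \<bullet> v"
    by (simp add: grad_def inner_sum_right inner_commute mult.commute)
  finally show ?thesis .
qed

lemma smooth_fun_continuous_on_grad:
  assumes "smooth_fun f"
  shows "continuous_on S (grad f)"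
proof -
  have "continuous_on S (\<lambda>x. frechet_derivative f (at x) b)" for b
    using smooth_fun_continuous_on[OF smooth_fun_frechet_derivative[OF assms]] .
  then show ?thesis
    unfolding grad_def by (intro continuous_intros)
qed

lemma test_fun_imp_smooth_fun: "test_fun \<Omega> \<phi> \<Longrightarrow> smooth_fun \<phi>"
  by (simp add: test_fun_def)

lemma test_fun_eq_zero_outside: "test_fun \<Omega> \<phi> \<Longrightarrow> x \<notin> \<Omega> \<Longrightarrow> \<phi> x = 0"
  unfolding test_fun_def by (metis (mono_tags) closure_subset mem_Collect_eq subsetD)

lemma grad_test_fun_eq_zero_outside:
  assumes "test_fun \<Omega> \<phi>" "x \<notin> \<Omega>"
  shows "grad \<phi> x = 0"
proof -
  let ?K = "closure {y. \<phi> y \<noteq> 0}"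
  have "?K \<subseteq> \<Omega>" using assms(1) by (simp add: test_fun_def)
  with assms(2) have "x \<in> - ?K" by blast
  have "((\<lambda>_. 0) has_derivative (\<lambda>_. 0)) (at x)" by simp
  then have "(\<phi> has_derivative (\<lambda>_. 0)) (at x)"
    by (rule has_derivative_transform_within_open[where s="- ?K"])
      (use \<open>x \<in> - ?K\<close> in auto, metis (mono_tags) closure_subset mem_Collect_eq subsetD)
  then have "frechet_derivative \<phi> (at x) = (\<lambda>_. 0)"
    by (metis frechet_derivative_at)
  then show ?thesis
    by (simp add: grad_def)
qed

lemma has_field_derivative_along_ray:
  assumes "f differentiable (at (t *\<^sub>R x))"
  shows "((\<lambda>t. f (t *\<^sub>R x)) has_field_derivative (grad f (t *\<^sub>R x) \<bullet> x)) (at t)"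
proof -
  let ?D = "frechet_derivative f (at (t *\<^sub>R x))"
  have D: "(f has_derivative ?D) (at (t *\<^sub>R x))"
    using assms frechet_derivative_works by blast
  have "((\<lambda>t. f (t *\<^sub>R x)) has_derivative (\<lambda>h. ?D (h *\<^sub>R x))) (at t)"
    using has_derivative_compose[of "\<lambda>t. t *\<^sub>R x" "\<lambda>h. h *\<^sub>R x" t UNIV f ?D] D
    by (simp add: has_derivative_scaleR_left[OF has_derivative_ident])
  moreover have "(\<lambda>h. ?D (h *\<^sub>R x)) = (*) (grad f (t *\<^sub>R x) \<bullet> x)"
    using linear_scale[OF has_derivative_linear[OF D]]
    by (auto simp: frechet_derivative_eq_grad_inner[OF assms])
  ultimately show ?thesis
    by (simp add: has_field_derivative_def)
qed

section \<open>A Poincare inequality by dilation\<close>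

abbreviation centered_cube :: "real \<Rightarrow> 'a::euclidean_space set" where
  "centered_cube r \<equiv> cbox ((-r) *\<^sub>R One) (r *\<^sub>R One)"

lemma mem_centered_cube_iff: "x \<in> centered_cube r \<longleftrightarrow> (\<forall>i\<in>Basis. \<bar>x \<bullet> i\<bar> \<le> r)"
  by (auto simp: mem_box abs_le_iff)

lemma norm_le_imp_mem_centered_cube: "norm x \<le> r \<Longrightarrow> x \<in> centered_cube r"
  unfolding mem_centered_cube_iff using Basis_le_norm order_trans by blast

lemma centered_cube_mono:
  "r \<le> s \<Longrightarrow> centered_cube r \<subseteq> (centered_cube s :: 'a::euclidean_space set)"
  unfolding subset_iff mem_centered_cube_iff by force

lemma has_integral_dilation_centered_cube:
  fixes f :: "'a::euclidean_space \<Rightarrow> real"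
  assumes f: "(f has_integral I) (centered_cube R)" and supp: "\<And>x. f x \<noteq> 0 \<Longrightarrow> norm x < R"
    and "0 < l" "R \<le> l * S"
  shows "((\<lambda>x. f (l *\<^sub>R x)) has_integral I / l ^ DIM('a)) (centered_cube S)"
proof -
  have "((\<lambda>x. f (l *\<^sub>R x + 0)) has_integral I /\<^sub>R l ^ DIM('a))
      (cbox (((-R) *\<^sub>R One - 0) /\<^sub>R l) ((R *\<^sub>R One - 0) /\<^sub>R l))"
    using has_integral_affinity'[OF f \<open>0 < l\<close>] .
  moreover have "((-R) *\<^sub>R One - 0) /\<^sub>R l = (-(R/l)) *\<^sub>R (One::'a)"
    "(R *\<^sub>R One - 0) /\<^sub>R l = (R/l) *\<^sub>R (One::'a)"
    by (simp_all add: divide_inverse mult.commute)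
  ultimately have "((\<lambda>x. f (l *\<^sub>R x)) has_integral I / l ^ DIM('a)) (centered_cube (R/l))"
    by (simp add: divide_inverse mult.commute)
  then show ?thesis
  proof (rule has_integral_on_superset)
    show "centered_cube (R/l) \<subseteq> (centered_cube S :: 'a set)"
      using assms by (intro centered_cube_mono) (simp add: field_simps)
  next
    fix x :: 'a
    assume "x \<notin> centered_cube (R/l)"
    then have "\<not> norm x \<le> R/l" using norm_le_imp_mem_centered_cube by blast
    then have "\<not> norm (l *\<^sub>R x) < R" using \<open>0 < l\<close> by (simp add: field_simps)
    then show "f (l *\<^sub>R x) = 0" using supp by blast
  qed
qed

lemma has_field_derivative_integral_square_dilation:
  fixes \<phi> :: "'a::euclidean_space \<Rightarrow> real"
  assumes diff: "\<And>x. \<phi> differentiable (at x)" and cont: "continuous_on UNIV (grad \<phi>)"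
  shows "((\<lambda>l. integral (cbox a b) (\<lambda>x. (\<phi> (l *\<^sub>R x))\<^sup>2)) has_field_derivative
    integral (cbox a b) (\<lambda>x. 2 * (grad \<phi> x \<bullet> x) * \<phi> x)) (at 1)"
proof -
  define D where "D l x = 2 * (grad \<phi> (l *\<^sub>R x) \<bullet> x) * \<phi> (l *\<^sub>R x)" for l x
  have c\<phi>: "continuous_on S \<phi>" for S
    using diff by (meson continuous_at_imp_continuous_on differentiable_imp_continuous_within)
  have "((\<lambda>l. integral (cbox a b) (\<lambda>x. (\<phi> (l *\<^sub>R x))\<^sup>2)) has_field_derivative
      integral (cbox a b) (D 1)) (at 1 within UNIV)"
  proof (rule leibniz_rule_field_derivative)
    fix l x
    show "((\<lambda>l. (\<phi> (l *\<^sub>R x))\<^sup>2) has_field_derivative D l x) (at l within UNIV)"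
      using DERIV_power[OF has_field_derivative_along_ray[of \<phi> l x], of 2] diff
      unfolding D_def by (simp add: mult.commute mult.left_commute)
  next
    show "(\<lambda>x. (\<phi> (l *\<^sub>R x))\<^sup>2) integrable_on cbox a b" for l
      by (intro integrable_continuous continuous_intros continuous_on_compose2[OF c\<phi>]) auto
    show "continuous_on (UNIV \<times> cbox a b) (\<lambda>(l, x). D l x)"
      unfolding D_def split_beta
      by (intro continuous_intros continuous_on_compose2[OF c\<phi>] continuous_on_compose2[OF cont]) auto
  qed auto
  then show ?thesis
    by (simp add: D_def[abs_def])
qed

lemma integral_radial_derivative_square:
  fixes \<phi> :: "'a::euclidean_space \<Rightarrow> real"
  assumes diff: "\<And>x. \<phi> differentiable (at x)" and cont: "continuous_on UNIV (grad \<phi>)"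
    and supp: "\<And>x. \<phi> x \<noteq> 0 \<Longrightarrow> norm x < R" and "0 \<le> R"
  shows "integral (centered_cube (2*R)) (\<lambda>x. 2 * (grad \<phi> x \<bullet> x) * \<phi> x)
    = - real DIM('a) * integral (centered_cube (2*R)) (\<lambda>x. (\<phi> x)\<^sup>2)"
proof -
  let ?C = "centered_cube (2*R) :: 'a set"
  let ?F = "\<lambda>l. integral ?C (\<lambda>x. (\<phi> (l *\<^sub>R x))\<^sup>2)"
  define I where "I = integral (centered_cube R) (\<lambda>x. (\<phi> x)\<^sup>2)"
  have "((\<lambda>x. (\<phi> x)\<^sup>2) has_integral I) (centered_cube R)"
    unfolding I_def using diff
    by (intro integrable_integral integrable_continuous continuous_intros continuous_at_imp_continuous_on)
      (simp add: differentiable_imp_continuous_within)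
  then have dilation: "?F l = I / l ^ DIM('a)" if "1/2 < l" for l
  proof (intro integral_unique has_integral_dilation_centered_cube)
    show "R \<le> l * (2 * R)"
      using that \<open>0 \<le> R\<close> mult_right_mono[of 1 "2 * l" R] by simp
  qed (use that supp in auto)
  have "(?F has_field_derivative - real DIM('a) * I) (at 1)"
  proof (rule has_field_derivative_transform_within_open[where S="{1/2<..}"])
    show "((\<lambda>l. I / l ^ DIM('a)) has_field_derivative - real DIM('a) * I) (at 1)"
      by (auto intro!: derivative_eq_intros)
    show "I / l ^ DIM('a) = ?F l" if "l \<in> {1/2<..}" for l
      using dilation[of l] that by simp
  qed auto
  with has_field_derivative_integral_square_dilation[OF diff cont]
  have "integral ?C (\<lambda>x. 2 * (grad \<phi> x \<bullet> x) * \<phi> x) = - real DIM('a) * I"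
    by (rule DERIV_unique)
  then show ?thesis
    using dilation[of 1] by simp
qed

lemma two_mult_le_weighted_sum_squares:
  fixes a b e :: real
  assumes "0 < e"
  shows "2 * a * b \<le> e * a\<^sup>2 + b\<^sup>2 / e"
proof -
  have "0 \<le> (e * a - b)\<^sup>2 / e" using assms by simp
  also have "\<dots> = e * a\<^sup>2 + b\<^sup>2 / e - 2 * a * b"
    using assms by (simp add: power2_eq_square field_simps)
  finally show ?thesis by simp
qed

lemma inner_mult_le_weighted_sum_squares:
  fixes g x :: "'a::real_inner" and p :: real
  assumes "0 < d" and "p \<noteq> 0 \<Longrightarrow> norm x < R"
  shows "- (2 * (g \<bullet> x) * p) \<le> (d/2) * p\<^sup>2 + (2 * R\<^sup>2 / d) * (norm g)\<^sup>2"
proof (cases "p = 0")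
  case True
  then show ?thesis using \<open>0 < d\<close> by simp
next
  case False
  then have "norm x < R" by (rule assms(2))
  have "\<bar>g \<bullet> x\<bar> \<le> norm g * norm x"
    by (rule Cauchy_Schwarz_ineq2)
  also have "\<dots> \<le> R * norm g"
    using \<open>norm x < R\<close> by (metis mult.commute less_imp_le norm_ge_zero mult_right_mono)
  finally have "\<bar>g \<bullet> x\<bar> \<le> R * norm g" .
  have "- (2 * (g \<bullet> x) * p) \<le> 2 * \<bar>p\<bar> * \<bar>g \<bullet> x\<bar>"
    using abs_ge_minus_self[of "2 * (g \<bullet> x) * p"] by (simp add: abs_mult)
  also have "\<dots> \<le> 2 * \<bar>p\<bar> * (R * norm g)"
    using \<open>\<bar>g \<bullet> x\<bar> \<le> R * norm g\<close> by (intro mult_left_mono) auto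
  also have "\<dots> \<le> (d/2) * \<bar>p\<bar>\<^sup>2 + (R * norm g)\<^sup>2 / (d/2)"
    using \<open>0 < d\<close> by (intro two_mult_le_weighted_sum_squares) simp
  also have "\<dots> = (d/2) * p\<^sup>2 + (2 * R\<^sup>2 / d) * (norm g)\<^sup>2"
    by (simp add: power_mult_distrib field_simps)
  finally show ?thesis .
qed

lemma poincare_centered_cube:
  fixes \<phi> :: "'a::euclidean_space \<Rightarrow> real"
  assumes diff: "\<And>x. \<phi> differentiable (at x)" and cont: "continuous_on UNIV (grad \<phi>)"
    and supp: "\<And>x. \<phi> x \<noteq> 0 \<Longrightarrow> norm x < R" and "0 \<le> R"
  shows "integral (centered_cube (2*R)) (\<lambda>x. (\<phi> x)\<^sup>2)
    \<le> (2 * R / DIM('a))\<^sup>2 * integral (centered_cube (2*R)) (\<lambda>x. (norm (grad \<phi> x))\<^sup>2)"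
proof -
  let ?C = "centered_cube (2*R) :: 'a set"
  define d where "d = real DIM('a)"
  define I where "I = integral ?C (\<lambda>x. (\<phi> x)\<^sup>2)"
  define J where "J = integral ?C (\<lambda>x. (norm (grad \<phi> x))\<^sup>2)"
  have "0 < d" by (simp add: d_def)
  have c\<phi>: "continuous_on S \<phi>" for S
    using diff by (meson continuous_at_imp_continuous_on differentiable_imp_continuous_within)
  have cg: "continuous_on S (grad \<phi>)" for S
    using continuous_on_subset[OF cont] by blast
  have I: "((\<lambda>x. (\<phi> x)\<^sup>2) has_integral I) ?C"
    unfolding I_def by (intro integrable_integral integrable_continuous continuous_intros c\<phi>)
  have J: "((\<lambda>x. (norm (grad \<phi> x))\<^sup>2) has_integral J) ?C"
    unfolding J_def by (intro integrable_integral integrable_continuous continuous_intros cg)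
  have "(\<lambda>x. 2 * (grad \<phi> x \<bullet> x) * \<phi> x) integrable_on ?C"
    by (intro integrable_continuous continuous_intros c\<phi> cg)
  moreover have "integral ?C (\<lambda>x. 2 * (grad \<phi> x \<bullet> x) * \<phi> x) = - d * I"
    unfolding d_def I_def by (rule integral_radial_derivative_square[OF diff cont supp \<open>0 \<le> R\<close>])
  ultimately have "((\<lambda>x. 2 * (grad \<phi> x \<bullet> x) * \<phi> x) has_integral - d * I) ?C"
    by (simp add: has_integral_integral)
  from has_integral_neg[OF this]
  have radial: "((\<lambda>x. - (2 * (grad \<phi> x \<bullet> x) * \<phi> x)) has_integral d * I) ?C"
    by simp
  have pointwise: "- (2 * (grad \<phi> x \<bullet> x) * \<phi> x)
      \<le> (d/2) * (\<phi> x)\<^sup>2 + (2 * R\<^sup>2 / d) * (norm (grad \<phi> x))\<^sup>2" for x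
    using \<open>0 < d\<close> supp by (rule inner_mult_le_weighted_sum_squares)
  have "d * I \<le> (d/2) * I + (2 * R\<^sup>2 / d) * J"
    using radial has_integral_add[OF has_integral_mult_right[OF I] has_integral_mult_right[OF J]]
      pointwise
    by (rule has_integral_le)
  then have "I \<le> (4 * R\<^sup>2 / d\<^sup>2) * J"
    using \<open>0 < d\<close> by (simp add: field_simps power2_eq_square)
  then show ?thesis
    unfolding I_def J_def d_def by (simp add: power_divide power_mult_distrib)
qed

lemma set_nn_integral_eq_integral_cbox:
  fixes h :: "'a::euclidean_space \<Rightarrow> real"
  assumes "continuous_on (cbox a b) h" "\<And>x. 0 \<le> h x" "\<And>x. x \<notin> S \<Longrightarrow> h x = 0"
    and "S \<subseteq> cbox a b"
  shows "(\<integral>\<^sup>+x\<in>S. ennreal (h x) \<partial>lebesgue) = ennreal (integral (cbox a b) h)"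
proof -
  have "(h has_integral integral (cbox a b) h) (cbox a b)"
    using assms(1) by (intro integrable_integral integrable_continuous)
  then have "(h has_integral integral (cbox a b) h) UNIV"
    by (rule has_integral_on_superset) (use assms(3,4) in auto)
  moreover have "(\<lambda>x. if x \<in> S then h x else 0) = h"
    using assms(3) by auto
  ultimately have "(h has_integral integral (cbox a b) h) S"
    using has_integral_restrict_UNIV[of S h] by simp
  from nn_integral_has_integral_lebesgue'[OF assms(2) this] show ?thesis
    by (simp add: nn_integral_completion)
qed

lemma set_nn_integral_grad_test_fun_finite:
  assumes "test_fun \<Omega> \<phi>" "bounded \<Omega>"
  shows "(\<integral>\<^sup>+x\<in>\<Omega>. ennreal ((norm (grad \<phi> x))\<^sup>2) \<partial>lebesgue) < \<infinity>"
proof -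
  obtain a where "\<Omega> \<subseteq> cbox (- a) a"
    using bounded_subset_cbox_symmetric[OF assms(2)] by blast
  then have "(\<integral>\<^sup>+x\<in>\<Omega>. ennreal ((norm (grad \<phi> x))\<^sup>2) \<partial>lebesgue)
      = ennreal (integral (cbox (- a) a) (\<lambda>x. (norm (grad \<phi> x))\<^sup>2))"
    using assms(1)
    by (intro set_nn_integral_eq_integral_cbox continuous_intros smooth_fun_continuous_on_grad
        test_fun_imp_smooth_fun) (auto simp: grad_test_fun_eq_zero_outside)
  then show ?thesis by simp
qed

lemma poincare_test_fun:
  fixes \<phi> :: "'a::euclidean_space \<Rightarrow> real"
  assumes "test_fun \<Omega> \<phi>" "\<Omega> \<subseteq> ball 0 R"
  shows "(\<integral>\<^sup>+x\<in>\<Omega>. ennreal ((\<phi> x)\<^sup>2) \<partial>lebesgue)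
    \<le> ennreal ((2 * R / DIM('a))\<^sup>2) * (\<integral>\<^sup>+x\<in>\<Omega>. ennreal ((norm (grad \<phi> x))\<^sup>2) \<partial>lebesgue)"
proof (cases "\<Omega> = {}")
  case False
  then obtain y where "y \<in> \<Omega>" by blast
  with assms(2) have "norm y < R" by (auto simp: subset_iff)
  then have "0 \<le> R" using norm_ge_zero[of y] by linarith
  let ?C = "centered_cube (2 * R) :: 'a set"
  have smooth: "smooth_fun \<phi>" by (rule test_fun_imp_smooth_fun[OF assms(1)])
  have c\<phi>: "continuous_on S \<phi>" and cg: "continuous_on S (grad \<phi>)" for S
    using smooth by (auto intro: smooth_fun_continuous_on smooth_fun_continuous_on_grad)
  have supp: "norm x < R" if "\<phi> x \<noteq> 0" for x
    using test_fun_eq_zero_outside[OF assms(1), of x] assms(2) that by (auto simp: subset_iff)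
  have "\<Omega> \<subseteq> ?C"
  proof
    fix x assume "x \<in> \<Omega>"
    then have "norm x \<le> 2 * R" using assms(2) \<open>0 \<le> R\<close> by (auto simp: subset_iff)
    then show "x \<in> ?C" by (rule norm_le_imp_mem_centered_cube)
  qed
  then have "(\<integral>\<^sup>+x\<in>\<Omega>. ennreal ((\<phi> x)\<^sup>2) \<partial>lebesgue) = ennreal (integral ?C (\<lambda>x. (\<phi> x)\<^sup>2))"
    and "(\<integral>\<^sup>+x\<in>\<Omega>. ennreal ((norm (grad \<phi> x))\<^sup>2) \<partial>lebesgue)
      = ennreal (integral ?C (\<lambda>x. (norm (grad \<phi> x))\<^sup>2))"
    using assms(1)
    by (auto intro!: set_nn_integral_eq_integral_cbox continuous_intros c\<phi> cg
        simp: test_fun_eq_zero_outside grad_test_fun_eq_zero_outside)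
  moreover have "0 \<le> integral ?C (\<lambda>x. (norm (grad \<phi> x))\<^sup>2)"
    by (intro integral_nonneg integrable_continuous continuous_intros cg) simp
  moreover have "integral ?C (\<lambda>x. (\<phi> x)\<^sup>2)
      \<le> (2 * R / DIM('a))\<^sup>2 * integral ?C (\<lambda>x. (norm (grad \<phi> x))\<^sup>2)"
    using smooth_fun_differentiable[OF smooth] smooth_fun_continuous_on_grad[OF smooth] supp \<open>0 \<le> R\<close>
    by (rule poincare_centered_cube)
  ultimately show ?thesis
    by (simp add: ennreal_mult[symmetric] ennreal_leI)
qed simp


section \<open>Square-integrable functions\<close>

lemma power2_norm_add_le:
  fixes x y :: "'a::real_normed_vector"
  shows "(norm (x + y))\<^sup>2 \<le> 2 * (norm x)\<^sup>2 + 2 * (norm y)\<^sup>2"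
proof -
  have "(norm (x + y))\<^sup>2 \<le> (norm x + norm y)\<^sup>2"
    by (simp add: norm_triangle_ineq power_mono)
  also have "\<dots> \<le> 2 * (norm x)\<^sup>2 + 2 * (norm y)\<^sup>2"
    using sum_squares_bound[of "norm x" "norm y"] by (simp add: power2_sum)
  finally show ?thesis .
qed

lemma nn_integral_norm_square_le:
  fixes f g :: "'a \<Rightarrow> 'b::{real_normed_vector, second_countable_topology}"
  assumes "f \<in> borel_measurable M" "g \<in> borel_measurable M"
  shows "(\<integral>\<^sup>+x. ennreal ((norm (f x))\<^sup>2) \<partial>M)
    \<le> 2 * (\<integral>\<^sup>+x. ennreal ((norm (g x - f x))\<^sup>2) \<partial>M) + 2 * (\<integral>\<^sup>+x. ennreal ((norm (g x))\<^sup>2) \<partial>M)"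
proof -
  have "(\<integral>\<^sup>+x. ennreal ((norm (f x))\<^sup>2) \<partial>M)
      \<le> (\<integral>\<^sup>+x. 2 * ennreal ((norm (g x - f x))\<^sup>2) + 2 * ennreal ((norm (g x))\<^sup>2) \<partial>M)"
  proof (rule nn_integral_mono)
    fix x
    have "(norm (f x))\<^sup>2 \<le> 2 * (norm (g x - f x))\<^sup>2 + 2 * (norm (g x))\<^sup>2"
      using power2_norm_add_le[of "f x - g x" "g x"] by (simp add: norm_minus_commute)
    then have "ennreal ((norm (f x))\<^sup>2) \<le> ennreal (2 * (norm (g x - f x))\<^sup>2 + 2 * (norm (g x))\<^sup>2)"
      by (rule ennreal_leI)
    also have "\<dots> = 2 * ennreal ((norm (g x - f x))\<^sup>2) + 2 * ennreal ((norm (g x))\<^sup>2)"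
      by (simp add: ennreal_mult)
    finally show "ennreal ((norm (f x))\<^sup>2) \<le> \<dots>" .
  qed
  also have "\<dots> = 2 * (\<integral>\<^sup>+x. ennreal ((norm (g x - f x))\<^sup>2) \<partial>M) + 2 * (\<integral>\<^sup>+x. ennreal ((norm (g x))\<^sup>2) \<partial>M)"
    using assms by (simp add: nn_integral_add nn_integral_cmult)
  finally show ?thesis .
qed

lemma integrable_norm_square:
  fixes f :: "'a \<Rightarrow> 'b::{real_normed_vector, second_countable_topology}"
  assumes "f \<in> borel_measurable M" "(\<integral>\<^sup>+x. ennreal ((norm (f x))\<^sup>2) \<partial>M) < \<infinity>"
  shows "integrable M (\<lambda>x. (norm (f x))\<^sup>2)"
  using assms by (intro integrableI_bounded) auto

lemma integrable_inner_if_norm_square_integrable: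
  fixes f g :: "'a \<Rightarrow> 'b::{real_inner, second_countable_topology}"
  assumes "f \<in> borel_measurable M" "g \<in> borel_measurable M"
    and "integrable M (\<lambda>x. (norm (f x))\<^sup>2)" "integrable M (\<lambda>x. (norm (g x))\<^sup>2)"
  shows "integrable M (\<lambda>x. f x \<bullet> g x)"
proof (rule Bochner_Integration.integrable_bound)
  show "integrable M (\<lambda>x. (norm (f x))\<^sup>2 + (norm (g x))\<^sup>2)"
    using assms(3,4) by auto
  show "(\<lambda>x. f x \<bullet> g x) \<in> borel_measurable M"
    using assms(1,2) by (rule borel_measurable_inner)
  have "\<bar>f x \<bullet> g x\<bar> \<le> (norm (f x))\<^sup>2 + (norm (g x))\<^sup>2" for x
  proof -
    have "0 \<le> norm (f x) * norm (g x)" by simp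
    then show ?thesis
      using Cauchy_Schwarz_ineq2[of "f x" "g x"] sum_squares_bound[of "norm (f x)" "norm (g x)"]
      by linarith
  qed
  then show "AE x in M. norm (f x \<bullet> g x) \<le> norm ((norm (f x))\<^sup>2 + (norm (g x))\<^sup>2)"
    by simp
qed

lemma L2_limit_of_orthogonal_eq_zero:
  fixes g :: "'a \<Rightarrow> 'b::{real_inner, second_countable_topology}"
  assumes g: "g \<in> borel_measurable M" and \<psi>: "\<And>n. \<psi> n \<in> borel_measurable M"
    and \<psi>_finite: "\<And>n. (\<integral>\<^sup>+x. ennreal ((norm (\<psi> n x))\<^sup>2) \<partial>M) < \<infinity>"
    and lim: "(\<lambda>n. \<integral>\<^sup>+x. ennreal ((norm (\<psi> n x - g x))\<^sup>2) \<partial>M) \<longlonglongrightarrow> 0"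
    and orth: "\<And>n. (\<integral>x. g x \<bullet> \<psi> n x \<partial>M) = 0"
  shows "(\<integral>\<^sup>+x. ennreal ((norm (g x))\<^sup>2) \<partial>M) = 0"
proof -
  define B where "B n = (\<integral>\<^sup>+x. ennreal ((norm (\<psi> n x - g x))\<^sup>2) \<partial>M)" for n
  obtain n0 where "B n0 < 1"
    using order_tendstoD(2)[OF lim, of 1] unfolding B_def eventually_sequentially by auto
  have "(\<integral>\<^sup>+x. ennreal ((norm (g x))\<^sup>2) \<partial>M) \<le> 2 * B n0 + 2 * (\<integral>\<^sup>+x. ennreal ((norm (\<psi> n0 x))\<^sup>2) \<partial>M)"
    unfolding B_def using g \<psi> by (rule nn_integral_norm_square_le)
  also have "\<dots> < \<infinity>"
  proof -
    have "B n0 < \<infinity>" using \<open>B n0 < 1\<close> by (rule less_trans) simp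
    then show ?thesis using \<psi>_finite[of n0] by (simp add: ennreal_mult_less_top)
  qed
  finally have int_g: "integrable M (\<lambda>x. (norm (g x))\<^sup>2)"
    using g by (rule integrable_norm_square[rotated])
  have int_\<psi>: "integrable M (\<lambda>x. (norm (\<psi> n x))\<^sup>2)" for n
    using \<psi> \<psi>_finite by (rule integrable_norm_square)
  have int_inner: "integrable M (\<lambda>x. g x \<bullet> \<psi> n x)" for n
    using g \<psi> int_g int_\<psi> by (rule integrable_inner_if_norm_square_integrable)
  have int_diff: "integrable M (\<lambda>x. (norm (\<psi> n x - g x))\<^sup>2)" for n
  proof -
    have "(\<lambda>x. (norm (\<psi> n x - g x))\<^sup>2) = (\<lambda>x. (norm (\<psi> n x))\<^sup>2 + (norm (g x))\<^sup>2 - 2 * (g x \<bullet> \<psi> n x))"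
      by (simp add: power2_norm_eq_inner inner_diff_left inner_diff_right inner_commute)
    then show ?thesis using int_g int_\<psi> int_inner by simp
  qed
  have le_B: "ennreal (\<integral>x. (norm (g x))\<^sup>2 \<partial>M) \<le> B n" for n
  proof -
    have "(\<integral>x. (norm (g x))\<^sup>2 \<partial>M) \<le> (\<integral>x. (norm (\<psi> n x - g x))\<^sup>2 + 2 * (g x \<bullet> \<psi> n x) \<partial>M)"
    proof (rule integral_mono)
      show "(norm (g x))\<^sup>2 \<le> (norm (\<psi> n x - g x))\<^sup>2 + 2 * (g x \<bullet> \<psi> n x)" for x
        by (simp add: power2_norm_eq_inner inner_diff_left inner_diff_right inner_commute)
    qed (use int_g int_diff int_inner in auto)
    also have "\<dots> = (\<integral>x. (norm (\<psi> n x - g x))\<^sup>2 \<partial>M)"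
      using int_diff int_inner orth by simp
    finally show ?thesis
      unfolding B_def using nn_integral_eq_integral[OF int_diff] by (simp add: ennreal_leI)
  qed
  have "ennreal (\<integral>x. (norm (g x))\<^sup>2 \<partial>M) = 0"
    using LIMSEQ_le_const[OF lim[folded B_def], of "ennreal (\<integral>x. (norm (g x))\<^sup>2 \<partial>M)"] le_B
    by (auto intro: antisym)
  then show ?thesis
    using nn_integral_eq_integral[OF int_g] by simp
qed

lemma nn_integral_norm_diff_square_eq:
  fixes f g :: "'a \<Rightarrow> 'b::{real_normed_vector, second_countable_topology}"
  assumes "g \<in> borel_measurable M" "(\<integral>\<^sup>+x. ennreal ((norm (g x))\<^sup>2) \<partial>M) = 0"
  shows "(\<integral>\<^sup>+x. ennreal ((norm (f x - g x))\<^sup>2) \<partial>M) = (\<integral>\<^sup>+x. ennreal ((norm (f x))\<^sup>2) \<partial>M)"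
proof (rule nn_integral_cong_AE)
  have "AE x in M. ennreal ((norm (g x))\<^sup>2) = 0"
    using assms by (subst nn_integral_0_iff_AE[symmetric]) auto
  then show "AE x in M. ennreal ((norm (f x - g x))\<^sup>2) = ennreal ((norm (f x))\<^sup>2)"
    by eventually_elim simp
qed

lemma L2_limit_eq_zero:
  fixes u :: "'a \<Rightarrow> 'b::{real_normed_vector, second_countable_topology}"
  assumes "u \<in> borel_measurable M" "\<And>n. f n \<in> borel_measurable M"
    and "(\<lambda>n. \<integral>\<^sup>+x. ennreal ((norm (f n x - u x))\<^sup>2) \<partial>M) \<longlonglongrightarrow> 0"
    and "(\<lambda>n. \<integral>\<^sup>+x. ennreal ((norm (f n x))\<^sup>2) \<partial>M) \<longlonglongrightarrow> 0"
  shows "(\<integral>\<^sup>+x. ennreal ((norm (u x))\<^sup>2) \<partial>M) = 0"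
proof -
  have "(\<lambda>n. 2 * (\<integral>\<^sup>+x. ennreal ((norm (f n x - u x))\<^sup>2) \<partial>M)
      + 2 * (\<integral>\<^sup>+x. ennreal ((norm (f n x))\<^sup>2) \<partial>M)) \<longlonglongrightarrow> 2 * 0 + 2 * 0"
    using assms(3,4) by (intro tendsto_add ennreal_tendsto_cmult) auto
  moreover have "(\<integral>\<^sup>+x. ennreal ((norm (u x))\<^sup>2) \<partial>M)
      \<le> 2 * (\<integral>\<^sup>+x. ennreal ((norm (f n x - u x))\<^sup>2) \<partial>M) + 2 * (\<integral>\<^sup>+x. ennreal ((norm (f n x))\<^sup>2) \<partial>M)"
    for n
    using assms(1,2) by (rule nn_integral_norm_square_le)
  ultimately have "(\<integral>\<^sup>+x. ennreal ((norm (u x))\<^sup>2) \<partial>M) \<le> 0"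
    by (intro LIMSEQ_le_const) auto
  then show ?thesis by simp
qed

section \<open>Elements of H_0^1 orthogonal to all test functions\<close>

lemma H01_approx_measurable:
  assumes "H01_approx \<Omega> u g \<phi>" "\<Omega> \<in> sets lebesgue"
  shows "u \<in> borel_measurable (lebesgue_on \<Omega>)" "g \<in> borel_measurable (lebesgue_on \<Omega>)"
    and "\<phi> n \<in> borel_measurable (lebesgue_on \<Omega>)" "grad (\<phi> n) \<in> borel_measurable (lebesgue_on \<Omega>)"
proof -
  have smooth: "smooth_fun (\<phi> n)"
    using assms(1) by (auto simp: H01_approx_def intro: test_fun_imp_smooth_fun)
  show "u \<in> borel_measurable (lebesgue_on \<Omega>)" "g \<in> borel_measurable (lebesgue_on \<Omega>)"
    using assms by (simp_all add: H01_approx_def borel_measurable_restrict_space_iff)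
  show "\<phi> n \<in> borel_measurable (lebesgue_on \<Omega>)" "grad (\<phi> n) \<in> borel_measurable (lebesgue_on \<Omega>)"
    using assms(2) smooth
    by (auto intro: continuous_imp_measurable_on_sets_lebesgue smooth_fun_continuous_on
        smooth_fun_continuous_on_grad)
qed

lemma H01_approx_grad_eq_zero_if_orthogonal:
  fixes \<Omega> :: "'a::euclidean_space set"
  assumes approx: "H01_approx \<Omega> u g \<phi>" and "\<Omega> \<in> sets lebesgue" "bounded \<Omega>"
    and orth: "\<And>n. (LINT x:\<Omega>|lebesgue. g x \<bullet> grad (\<phi> n) x) = 0"
  shows "(\<integral>\<^sup>+x\<in>\<Omega>. ennreal ((norm (g x))\<^sup>2) \<partial>lebesgue) = 0"
proof -
  have restrict: "integral\<^sup>N (lebesgue_on \<Omega>) f = set_nn_integral lebesgue \<Omega> f" for f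
    using \<open>\<Omega> \<in> sets lebesgue\<close> by (simp add: nn_integral_restrict_space)
  have "(\<integral>\<^sup>+x. ennreal ((norm (g x))\<^sup>2) \<partial>lebesgue_on \<Omega>) = 0"
  proof (rule L2_limit_of_orthogonal_eq_zero)
    show "g \<in> borel_measurable (lebesgue_on \<Omega>)" "grad (\<phi> n) \<in> borel_measurable (lebesgue_on \<Omega>)"
      for n using H01_approx_measurable[OF approx \<open>\<Omega> \<in> sets lebesgue\<close>] by auto
    show "(\<integral>\<^sup>+x. ennreal ((norm (grad (\<phi> n) x))\<^sup>2) \<partial>lebesgue_on \<Omega>) < \<infinity>" for n
      unfolding restrict using approx \<open>bounded \<Omega>\<close>
      by (intro set_nn_integral_grad_test_fun_finite) (auto simp: H01_approx_def)
    show "(\<lambda>n. \<integral>\<^sup>+x. ennreal ((norm (grad (\<phi> n) x - g x))\<^sup>2) \<partial>lebesgue_on \<Omega>) \<longlonglongrightarrow> 0"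
      using approx by (simp add: restrict H01_approx_def)
    show "(\<integral>x. g x \<bullet> grad (\<phi> n) x \<partial>lebesgue_on \<Omega>) = 0" for n
      using orth[of n] \<open>\<Omega> \<in> sets lebesgue\<close>
      by (simp add: set_lebesgue_integral_def integral_restrict_space)
  qed
  then show ?thesis by (simp add: restrict)
qed

lemma H01_approx_AE_eq_zero_if_grad_eq_zero:
  fixes \<Omega> :: "'a::euclidean_space set"
  assumes approx: "H01_approx \<Omega> u g \<phi>" and "\<Omega> \<in> sets lebesgue" "bounded \<Omega>"
    and grad_zero: "(\<integral>\<^sup>+x\<in>\<Omega>. ennreal ((norm (g x))\<^sup>2) \<partial>lebesgue) = 0"
  shows "AE x in lebesgue. x \<in> \<Omega> \<longrightarrow> u x = 0"
proof -
  let ?N = "lebesgue_on \<Omega>"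
  have restrict: "integral\<^sup>N ?N f = set_nn_integral lebesgue \<Omega> f" for f
    using \<open>\<Omega> \<in> sets lebesgue\<close> by (simp add: nn_integral_restrict_space)
  note measurable = H01_approx_measurable[OF approx \<open>\<Omega> \<in> sets lebesgue\<close>]
  obtain R where "\<Omega> \<subseteq> ball 0 R"
    using bounded_subset_ballD[OF \<open>bounded \<Omega>\<close>] by blast
  have "(\<lambda>n. \<integral>\<^sup>+x. ennreal ((norm (grad (\<phi> n) x - g x))\<^sup>2) \<partial>?N) \<longlonglongrightarrow> 0"
    using approx by (simp add: restrict H01_approx_def)
  then have grad_lim: "(\<lambda>n. \<integral>\<^sup>+x. ennreal ((norm (grad (\<phi> n) x))\<^sup>2) \<partial>?N) \<longlonglongrightarrow> 0"
    using nn_integral_norm_diff_square_eq[OF measurable(2)] grad_zero by (simp add: restrict)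
  have "(\<lambda>n. \<integral>\<^sup>+x. ennreal ((norm (\<phi> n x))\<^sup>2) \<partial>?N) \<longlonglongrightarrow> 0"
  proof (rule tendsto_sandwich[OF _ _ tendsto_const])
    show "(\<lambda>n. ennreal ((2 * R / DIM('a))\<^sup>2) * \<integral>\<^sup>+x. ennreal ((norm (grad (\<phi> n) x))\<^sup>2) \<partial>?N)
        \<longlonglongrightarrow> 0"
      using ennreal_tendsto_cmult[OF _ grad_lim] by simp
    show "\<forall>\<^sub>F n in sequentially. \<integral>\<^sup>+x. ennreal ((norm (\<phi> n x))\<^sup>2) \<partial>?N
        \<le> ennreal ((2 * R / DIM('a))\<^sup>2) * \<integral>\<^sup>+x. ennreal ((norm (grad (\<phi> n) x))\<^sup>2) \<partial>?N"
      using approx \<open>\<Omega> \<subseteq> ball 0 R\<close> by (simp add: restrict H01_approx_def poincare_test_fun)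
  qed simp
  moreover have "(\<lambda>n. \<integral>\<^sup>+x. ennreal ((norm (\<phi> n x - u x))\<^sup>2) \<partial>?N) \<longlonglongrightarrow> 0"
    using approx by (simp add: restrict H01_approx_def)
  ultimately have "(\<integral>\<^sup>+x. ennreal ((norm (u x))\<^sup>2) \<partial>?N) = 0"
    using measurable by (intro L2_limit_eq_zero) auto
  then have "AE x in ?N. u x = 0"
    using measurable(1) by (subst (asm) nn_integral_0_iff_AE) auto
  then show ?thesis
    using \<open>\<Omega> \<in> sets lebesgue\<close> by (subst (asm) AE_restrict_space_iff) auto
qed

lemma continuous_on_AE_eq_zero:
  fixes u :: "'a::euclidean_space \<Rightarrow> 'b::real_normed_vector"
  assumes "open S" "continuous_on S u" "AE x in lebesgue. x \<in> S \<longrightarrow> u x = 0"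
  shows "\<forall>x\<in>S. u x = 0"
proof
  fix x assume "x \<in> S"
  have "open (S \<inter> u -` (- {0}))"
    using assms(2,1) by (rule continuous_open_preimage) (auto intro: open_Compl)
  moreover have "AE y \<in> S \<inter> u -` (- {0}) in lebesgue. y \<in> {}"
    using assms(3) by eventually_elim auto
  ultimately have "x \<notin> S \<inter> u -` (- {0})"
    using mem_closed_if_AE_lebesgue_open[OF _ closed_empty] by blast
  with \<open>x \<in> S\<close> show "u x = 0" by auto
qed

lemma mu_harmonic_weak_grad_orthogonal:
  assumes "mu_harmonic \<Omega> \<mu> u"
  obtains g \<phi> where "H01_approx \<Omega> u g \<phi>"
    and "\<And>\<psi>. test_fun \<Omega> \<psi> \<Longrightarrow> (LINT x:\<Omega>|lebesgue. g x \<bullet> grad \<psi> x) = 0"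
proof -
  obtain g where "neg_mu_laplacian \<Omega> \<mu> u g (\<lambda>_. 0)"
    using assms unfolding mu_harmonic_def by blast
  then show ?thesis
    unfolding neg_mu_laplacian_def in_N_perp_def H01_def
    by (auto simp: set_lebesgue_integral_def intro: that)
qed

theorem proposition3p7:
  fixes \<Omega> :: "'a::euclidean_space set" and \<mu> :: "'a measure" and u :: "'a \<Rightarrow> real"
  assumes "open \<Omega>" and "connected \<Omega>" and "\<Omega> \<noteq> {}" and "bounded \<Omega>"
    and "sets \<mu> = sets borel" and "finite_measure \<mu>"
    and "measure_support \<mu> \<subseteq> closure \<Omega>" and "emeasure \<mu> \<Omega> > 0"
    and "MPI \<Omega> \<mu>"
    and "continuous_on \<Omega> u"
    and "mu_harmonic \<Omega> \<mu> u"
    and "\<And>x. x \<in> frontier \<Omega> \<Longrightarrow> (u \<longlongrightarrow> 0) (at x within \<Omega>)"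
  shows "\<forall>x\<in>\<Omega>. u x = 0"
proof -
  obtain g \<phi> where approx: "H01_approx \<Omega> u g \<phi>"
    and orth: "\<And>\<psi>. test_fun \<Omega> \<psi> \<Longrightarrow> (LINT x:\<Omega>|lebesgue. g x \<bullet> grad \<psi> x) = 0"
    using mu_harmonic_weak_grad_orthogonal[OF \<open>mu_harmonic \<Omega> \<mu> u\<close>] by blast
  have "\<Omega> \<in> sets lebesgue"
    using \<open>open \<Omega>\<close> by simp
  moreover have "(\<integral>\<^sup>+x\<in>\<Omega>. ennreal ((norm (g x))\<^sup>2) \<partial>lebesgue) = 0"
    using approx \<open>\<Omega> \<in> sets lebesgue\<close> \<open>bounded \<Omega>\<close> orth
    by (rule H01_approx_grad_eq_zero_if_orthogonal) (use approx in \<open>simp add: H01_approx_def\<close>)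
  ultimately have "AE x in lebesgue. x \<in> \<Omega> \<longrightarrow> u x = 0"
    using approx \<open>bounded \<Omega>\<close> by (intro H01_approx_AE_eq_zero_if_grad_eq_zero)
  then show ?thesis
    using \<open>open \<Omega>\<close> \<open>continuous_on \<Omega> u\<close> by (intro continuous_on_AE_eq_zero)
qed

end
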